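(* There exist an environment $E$ and a total preorder $\succeq$ on $\Pi^E$ such that $\succeq\in\mathrm{Ord}_{\mathrm{LTL}}(E)$ but $\succeq\notin\mathrm{Ord}_{\mathrm{ONMR}}(E)$.
   Context: An environment is a tuple $E=(\mathcal S,\mathcal A,\mathcal T,\mathcal I)$ where $\mathcal S,\mathcal A$ are finite nonempty sets, $\mathcal T:\mathcal S\times\mathcal A\to\Delta(\mathcal S)$ and $\mathcal I\in\Delta(\mathcal S)$. A policy is a map $\pi:\mathcal S\to\Delta(\mathcal A)$ (stationary, possibly stochastic); $\Pi^E$ denotes the set of all policies. A trajectory $\xi=(s_0,a_0,s_1,a_1,\dots)\in\Xi:=\mathcal S\times(\mathcal A\times\mathcal S)^\omega$ is generated under $\pi$ by $s_0\sim\mathcal I$, $a_t\sim\pi(s_t)$, $s_{t+1}\sim\mathcal T(s_t,a_t)$; $\mathbb E^\pi_\xi$ denotes expectation under this distribution. An objective-specification formalism $X$ assigns to each environment $E$ a set of objective specifications, each inducing a total preorder $\succeq$ on $\Pi^E$; $\mathrm{Ord}_X(E)$ is the set of total preorders so induced. A specification defining a scalar $J:\Pi^E\to\mathbb R$ induces $\pi_1\succeq\pi_2\iff J(\pi_1)\ge J(\pi_2)$. ONMR: specification $(\mathcal R,f,\gamma)$ with $\mathcal R:\mathcal S\times\mathcal A\times\mathcal S\to\mathbb R$, $f:\mathbb R\to\mathbb R$, $\gamma\in[0,1)$; $J(\pi)=f\big(\mathbb E^\pi_\xi[\sum_{t=0}^\infty\gamma^t\mathcal R(s_t,a_t,s_{t+1})]\big)$.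 LTL: specification $(\varphi)$ with $\varphi$ a linear temporal logic formula whose atomic propositions are the transitions $(s,a,s')\in\mathcal S\times\mathcal A\times\mathcal S$, built with $\neg,\lor,\land,\to$ and the temporal operators $\bigcirc$ (next), $\square$ (always), $\lozenge$ (eventually), $\mathcal U$ (until). Semantics on a trajectory $\xi$ at time $t$: an atomic proposition $(s,a,s')$ holds iff $(s_t,a_t,s_{t+1})=(s,a,s')$; $\bigcirc\psi$ holds iff $\psi$ holds at $t+1$; $\square\psi$ iff $\psi$ holds at every $t'\ge t$; $\lozenge\psi$ iff $\psi$ holds at some $t'\ge t$; $\psi\,\mathcal U\,\chi$ iff there is $t'\ge t$ with $\chi$ holding at $t'$ and $\psi$ holding at every $t''$ with $t\le t''<t'$; Boolean connectives as usual. $\varphi(\xi)=1$ if $\varphi$ holds at time $0$ and $0$ otherwise; $J(\pi)=\mathbb E^\pi_\xi[\varphi(\xi)]$. *)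

theory Defs
  imports "HOL-Probability.Probability"
begin

definition is_env :: "nat set \<Rightarrow> nat set \<Rightarrow> (nat \<Rightarrow> nat \<Rightarrow> nat pmf) \<Rightarrow> nat pmf \<Rightarrow> bool" where
  "is_env S A T I \<longleftrightarrow> finite S \<and> S \<noteq> {} \<and> finite A \<and> A \<noteq> {} \<and>
     set_pmf I \<subseteq> S \<and> (\<forall>s\<in>S. \<forall>a\<in>A. set_pmf (T s a) \<subseteq> S)"

definition policies :: "nat set \<Rightarrow> nat set \<Rightarrow> (nat \<Rightarrow> nat pmf) set" where
  "policies S A = {\<pi>. (\<forall>s\<in>S. set_pmf (\<pi> s) \<subseteq> A) \<and> (\<forall>s. s \<notin> S \<longrightarrow> \<pi> s = return_pmf undefined)}"

(* A trajectory (s0,a0,s1,a1,...) is the stream of pairs (s_t,a_t). *)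
fun pathprob :: "(nat \<Rightarrow> nat \<Rightarrow> nat pmf) \<Rightarrow> (nat \<Rightarrow> nat pmf) \<Rightarrow> nat pmf \<Rightarrow> (nat \<times> nat) list \<Rightarrow> real" where
  "pathprob T \<pi> D [] = 1"
| "pathprob T \<pi> D ((s, a) # xs) = pmf D s * pmf (\<pi> s) a * pathprob T \<pi> (T s a) xs"

(* The trajectory distribution under \<pi>: the probability measure on trajectories
   whose cylinder sets have the probabilities given by s0 ~ I, a_t ~ \<pi>(s_t),
   s_{t+1} ~ T(s_t,a_t). *)
definition traj :: "(nat \<Rightarrow> nat \<Rightarrow> nat pmf) \<Rightarrow> nat pmf \<Rightarrow> (nat \<Rightarrow> nat pmf) \<Rightarrow> (nat \<times> nat) stream measure" where
  "traj T I \<pi> = (THE M. prob_space M \<and> sets M = sets (stream_space (count_space UNIV)) \<and>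
      (\<forall>xs. measure M (sstart UNIV xs) = pathprob T \<pi> I xs))"

datatype ltl = Atom "nat \<times> nat \<times> nat" | Neg ltl | Or ltl ltl | And ltl ltl | Imp ltl ltl
  | Next ltl | Always ltl | Eventually ltl | Until ltl ltl

fun atoms :: "ltl \<Rightarrow> (nat \<times> nat \<times> nat) set" where
  "atoms (Atom p) = {p}"
| "atoms (Neg \<phi>) = atoms \<phi>"
| "atoms (Or \<phi> \<psi>) = atoms \<phi> \<union> atoms \<psi>"
| "atoms (And \<phi> \<psi>) = atoms \<phi> \<union> atoms \<psi>"
| "atoms (Imp \<phi> \<psi>) = atoms \<phi> \<union> atoms \<psi>"
| "atoms (Next \<phi>) = atoms \<phi>"
| "atoms (Always \<phi>) = atoms \<phi>"
| "atoms (Eventually \<phi>) = atoms \<phi>"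
| "atoms (Until \<phi> \<psi>) = atoms \<phi> \<union> atoms \<psi>"

fun sat :: "ltl \<Rightarrow> (nat \<times> nat) stream \<Rightarrow> nat \<Rightarrow> bool" where
  "sat (Atom (s, a, s')) \<xi> t \<longleftrightarrow> \<xi> !! t = (s, a) \<and> fst (\<xi> !! Suc t) = s'"
| "sat (Neg \<phi>) \<xi> t \<longleftrightarrow> \<not> sat \<phi> \<xi> t"
| "sat (Or \<phi> \<psi>) \<xi> t \<longleftrightarrow> sat \<phi> \<xi> t \<or> sat \<psi> \<xi> t"
| "sat (And \<phi> \<psi>) \<xi> t \<longleftrightarrow> sat \<phi> \<xi> t \<and> sat \<psi> \<xi> t"
| "sat (Imp \<phi> \<psi>) \<xi> t \<longleftrightarrow> (sat \<phi> \<xi> t \<longrightarrow> sat \<psi> \<xi> t)"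
| "sat (Next \<phi>) \<xi> t \<longleftrightarrow> sat \<phi> \<xi> (Suc t)"
| "sat (Always \<phi>) \<xi> t \<longleftrightarrow> (\<forall>t'\<ge>t. sat \<phi> \<xi> t')"
| "sat (Eventually \<phi>) \<xi> t \<longleftrightarrow> (\<exists>t'\<ge>t. sat \<phi> \<xi> t')"
| "sat (Until \<phi> \<psi>) \<xi> t \<longleftrightarrow> (\<exists>t'\<ge>t. sat \<psi> \<xi> t' \<and> (\<forall>t''. t \<le> t'' \<and> t'' < t' \<longrightarrow> sat \<phi> \<xi> t''))"

definition induced_ord :: "('p \<Rightarrow> real) \<Rightarrow> 'p set \<Rightarrow> ('p \<times> 'p) set" where
  "induced_ord J P = {(p1, p2). p1 \<in> P \<and> p2 \<in> P \<and> J p1 \<ge> J p2}"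

definition J_LTL :: "(nat \<Rightarrow> nat \<Rightarrow> nat pmf) \<Rightarrow> nat pmf \<Rightarrow> ltl \<Rightarrow> (nat \<Rightarrow> nat pmf) \<Rightarrow> real" where
  "J_LTL T I \<phi> \<pi> = measure (traj T I \<pi>) {\<xi>. sat \<phi> \<xi> 0}"

definition J_ONMR :: "(nat \<Rightarrow> nat \<Rightarrow> nat pmf) \<Rightarrow> nat pmf \<Rightarrow> (nat \<Rightarrow> nat \<Rightarrow> nat \<Rightarrow> real) \<Rightarrow> (real \<Rightarrow> real) \<Rightarrow> real
    \<Rightarrow> (nat \<Rightarrow> nat pmf) \<Rightarrow> real" where
  "J_ONMR T I R f \<gamma> \<pi> = f (integral\<^sup>L (traj T I \<pi>)
      (\<lambda>\<xi>. \<Sum>t. \<gamma> ^ t * R (fst (\<xi> !! t)) (snd (\<xi> !! t)) (fst (\<xi> !! Suc t))))"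

definition Ord_LTL :: "nat set \<Rightarrow> nat set \<Rightarrow> (nat \<Rightarrow> nat \<Rightarrow> nat pmf) \<Rightarrow> nat pmf \<Rightarrow> ((nat \<Rightarrow> nat pmf) \<times> (nat \<Rightarrow> nat pmf)) set set" where
  "Ord_LTL S A T I = {induced_ord (J_LTL T I \<phi>) (policies S A) | \<phi>. atoms \<phi> \<subseteq> S \<times> A \<times> S}"

definition Ord_ONMR :: "nat set \<Rightarrow> nat set \<Rightarrow> (nat \<Rightarrow> nat \<Rightarrow> nat pmf) \<Rightarrow> nat pmf \<Rightarrow> ((nat \<Rightarrow> nat pmf) \<times> (nat \<Rightarrow> nat pmf)) set set" where
  "Ord_ONMR S A T I = {induced_ord (J_ONMR T I R f \<gamma>) (policies S A) | R f \<gamma>. 0 \<le> \<gamma> \<and> \<gamma> < 1}"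

end

theory Submission
  imports Defs
begin

text \<open>
  Take a single absorbing state 0 with actions 0, 1, 2. Under a policy choosing its action
  from a distribution \<open>p\<close>, the trajectory is an i.i.d. stream of actions drawn from \<open>p\<close>.
  Every ONMR objective then depends on \<open>p\<close> only through the expected one-step reward
  \<open>\<integral>a. R 0 a 0 \<partial>p\<close>, a linear functional of \<open>p\<close>. The LTL formula
  ``first action 1, second action 2'' has value \<open>pmf p 1 * pmf p 2\<close>, which is \<open>1/4\<close> for the
  uniform distribution on \<open>{1, 2}\<close>. Whatever the rewards, the midpoint of \<open>r 1\<close> and \<open>r 2\<close> lies
  between \<open>r 0\<close> and one of them, so some distribution supported on \<open>{0, 1}\<close> or \<open>{0, 2}\<close> has
  the same expected reward, and hence the same ONMR value, but LTL value \<open>0\<close>.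
\<close>

lemma preorder_on_induced_ord: "preorder_on P (induced_ord J P)"
  unfolding preorder_on_def refl_on_def trans_def induced_ord_def by auto

lemma total_on_induced_ord: "total_on P (induced_ord J P)"
  unfolding total_on_def induced_ord_def by auto

lemma traj_eqI:
  assumes M: "prob_space M" "sets M = sets (stream_space (count_space UNIV))"
    and cylinders: "\<And>xs. measure M (sstart UNIV xs) = pathprob T \<pi> I xs"
  shows "traj T I \<pi> = M"
proof -
  have unique: "N = M"
    if N: "prob_space N" "sets N = sets (stream_space (count_space UNIV))"
      and "\<And>xs. measure N (sstart UNIV xs) = pathprob T \<pi> I xs" for N
  proof (rule stream_space_eq_sstart[where S = UNIV])
    fix xs :: "(nat \<times> nat) list"
    show "emeasure N (sstart UNIV xs) = emeasure M (sstart UNIV xs)"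
      using that cylinders M by (metis prob_space_def finite_measure.emeasure_eq_measure)
  qed (use M N in simp_all)
  show ?thesis
    unfolding traj_def by (rule the1_equality) (use assms unique in blast)+
qed

lemma prod_list_map_pmf_nonneg: "0 \<le> prod_list (map (pmf q) xs)"
  by (rule prod_list_nonneg) auto

lemma emeasure_stream_space_pmf_sstart:
  "emeasure (stream_space (measure_pmf q)) (sstart UNIV xs) = ennreal (prod_list (map (pmf q) xs))"
proof (induction xs)
  case Nil
  then show ?case
    using prob_space.emeasure_space_1[OF prob_space.prob_space_stream_space[OF prob_space_measure_pmf]]
    by (simp add: space_stream_space)
next
  case (Cons x xs)
  let ?M = "stream_space (measure_pmf q)"
  have sets: "sets ?M = sets (stream_space (count_space UNIV))"
    by (rule sets_stream_space_cong) simp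
  have tail: "{\<xi> \<in> space ?M. y ## \<xi> \<in> sstart UNIV (x # xs)} = (if y = x then sstart UNIV xs else {})"
    for y
    using sstart_in_streams[of xs UNIV] by (auto simp: space_stream_space)
  have "emeasure ?M (sstart UNIV (x # xs))
      = (\<integral>\<^sup>+y. emeasure ?M {\<xi> \<in> space ?M. y ## \<xi> \<in> sstart UNIV (x # xs)} \<partial>q)"
    using sets sets_sstart by (intro prob_space.emeasure_stream_space[OF prob_space_measure_pmf]) blast
  also have "\<dots> = (\<integral>\<^sup>+y. indicator {x} y * emeasure ?M (sstart UNIV xs) \<partial>q)"
    unfolding tail by (intro nn_integral_cong) (simp split: split_indicator)
  also have "\<dots> = ennreal (pmf q x) * ennreal (prod_list (map (pmf q) xs))"
    by (simp add: Cons nn_integral_multc emeasure_pmf_single)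
  also have "\<dots> = ennreal (prod_list (map (pmf q) (x # xs)))"
    by (simp add: ennreal_mult prod_list_map_pmf_nonneg)
  finally show ?case .
qed

lemma measure_stream_space_pmf_sstart:
  "measure (stream_space (measure_pmf q)) (sstart UNIV xs) = prod_list (map (pmf q) xs)"
  by (simp add: measure_def emeasure_stream_space_pmf_sstart prod_list_map_pmf_nonneg)

lemma pmf_map_pmf_Pair: "pmf (map_pmf (Pair s0) p) (s, a) = (if s = s0 then pmf p a else 0)"
  using pmf_map_inj'[of "Pair s0" p a] by (auto simp: inj_def pmf_eq_0_set_pmf)

lemma pathprob_absorbing:
  assumes "\<And>a. T s0 a = return_pmf s0"
  shows "pathprob T \<pi> (return_pmf s0) xs = prod_list (map (pmf (map_pmf (Pair s0) (\<pi> s0))) xs)"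
  by (induction xs) (auto simp: assms pmf_map_pmf_Pair)

lemma traj_absorbing:
  assumes "\<And>a. T s0 a = return_pmf s0"
  shows "traj T (return_pmf s0) \<pi> = stream_space (measure_pmf (map_pmf (Pair s0) (\<pi> s0)))"
  by (rule traj_eqI)
     (simp_all add: prob_space.prob_space_stream_space[OF prob_space_measure_pmf] sets_stream_space_cong
       measure_stream_space_pmf_sstart pathprob_absorbing[of T s0, OF assms])

lemma (in prob_space) distr_stream_space_snth: "distr (stream_space M) M (\<lambda>\<xi>. \<xi> !! t) = M"
proof -
  have "distr (stream_space M) M (\<lambda>\<xi>. \<xi> !! t)
      = distr (distr (\<Pi>\<^sub>M i\<in>UNIV. M) (stream_space M) to_stream) M (\<lambda>\<xi>. \<xi> !! t)"
    by (subst stream_space_eq_distr) (rule refl)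
  also have "\<dots> = distr (\<Pi>\<^sub>M i\<in>UNIV. M) M (\<lambda>X. X t)"
    by (subst distr_distr) (auto simp: comp_def to_stream_def)
  also have "\<dots> = M"
    by (rule distr_PiM_component) (auto simp: prob_space_axioms)
  finally show ?thesis .
qed

lemma (in prob_space) integral_stream_space_snth:
  fixes h :: "'a \<Rightarrow> real"
  assumes "h \<in> borel_measurable M"
  shows "(\<integral>\<xi>. h (\<xi> !! t) \<partial>stream_space M) = (\<integral>x. h x \<partial>M)"
  using integral_distr[of "\<lambda>\<xi>. \<xi> !! t" "stream_space M" M h] assms
  by (simp add: distr_stream_space_snth)

lemma (in prob_space) integrable_stream_space_snth_iff:
  fixes h :: "'a \<Rightarrow> real"
  assumes "h \<in> borel_measurable M"
  shows "integrable (stream_space M) (\<lambda>\<xi>. h (\<xi> !! t)) \<longleftrightarrow> integrable M h"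
  using integrable_distr_eq[of "\<lambda>\<xi>. \<xi> !! t" "stream_space M" M h] assms
  by (simp add: distr_stream_space_snth)

lemma AE_stream_space_pmf_snth: "AE \<xi> in stream_space (measure_pmf q). \<forall>t. \<xi> !! t \<in> set_pmf q"
proof -
  have "AE \<xi> in stream_space (measure_pmf q). stream_all (\<lambda>x. x \<in> set_pmf q) \<xi>"
    by (rule prob_space.AE_stream_all[OF prob_space_measure_pmf]) (simp_all add: AE_measure_pmf)
  then show ?thesis by (simp only: stream_all_def)
qed

lemma AE_stream_space_Pair_fst:
  "AE \<xi> in stream_space (map_pmf (Pair s0) p). \<forall>t. fst (\<xi> !! t) = s0"
  using AE_stream_space_pmf_snth[of "map_pmf (Pair s0) p"]
proof eventually_elim
  case (elim \<xi>)
  show ?case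
  proof
    fix t
    show "fst (\<xi> !! t) = s0"
      using spec[OF elim, of t] by auto
  qed
qed

lemma integral_discounted_sum_stream_space_pmf:
  fixes h :: "'a \<Rightarrow> real"
  assumes fin: "finite (set_pmf q)" and \<gamma>: "0 \<le> \<gamma>" "\<gamma> < 1"
  shows "(\<integral>\<xi>. (\<Sum>t. \<gamma> ^ t * h (\<xi> !! t)) \<partial>stream_space (measure_pmf q)) = (\<integral>x. h x \<partial>q) / (1 - \<gamma>)"
proof -
  let ?M = "stream_space (measure_pmf q)"
  define B where "B = (\<Sum>x\<in>set_pmf q. \<bar>h x\<bar>)"
  have integrable: "integrable ?M (\<lambda>\<xi>. \<gamma> ^ t * h (\<xi> !! t))" for t
    using measure_pmf.integrable_stream_space_snth_iff[of "\<lambda>x. \<gamma> ^ t * h x"] fin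
    by (simp add: integrable_measure_pmf_finite)
  have integral_snth: "(\<integral>\<xi>. \<gamma> ^ t * g (\<xi> !! t) \<partial>?M) = \<gamma> ^ t * (\<integral>x. g x \<partial>q)"
    for t and g :: "'a \<Rightarrow> real"
    using measure_pmf.integral_stream_space_snth[of "\<lambda>x. \<gamma> ^ t * g x" q t] by simp
  have norm_integral: "(\<integral>\<xi>. norm (\<gamma> ^ t * h (\<xi> !! t)) \<partial>?M) = \<gamma> ^ t * (\<integral>x. \<bar>h x\<bar> \<partial>q)" for t
    using \<gamma> integral_snth[of t "\<lambda>x. \<bar>h x\<bar>"] by (simp add: abs_mult)
  have "AE \<xi> in ?M. summable (\<lambda>t. norm (\<gamma> ^ t * h (\<xi> !! t)))"
    using AE_stream_space_pmf_snth
  proof eventually_elim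
    case (elim \<xi>)
    have "\<bar>h (\<xi> !! t)\<bar> \<le> B" for t
      unfolding B_def using elim fin by (intro member_le_sum) auto
    then have bound: "norm (norm (\<gamma> ^ t * h (\<xi> !! t))) \<le> \<gamma> ^ t * B" for t
      using \<gamma> by (simp add: abs_mult mult_left_mono)
    have "summable (\<lambda>t. \<gamma> ^ t * B)"
      using \<gamma> by (intro summable_mult2 summable_geometric) simp
    then show ?case
      using bound by (rule summable_comparison_test')
  qed
  moreover have "summable (\<lambda>t. \<integral>\<xi>. norm (\<gamma> ^ t * h (\<xi> !! t)) \<partial>?M)"
    unfolding norm_integral using \<gamma> by (intro summable_mult2 summable_geometric) simp
  ultimately have "(\<integral>\<xi>. (\<Sum>t. \<gamma> ^ t * h (\<xi> !! t)) \<partial>?M) = (\<Sum>t. \<integral>\<xi>. \<gamma> ^ t * h (\<xi> !! t) \<partial>?M)"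
    by (rule integral_suminf[OF integrable])
  also have "\<dots> = (\<Sum>t. \<gamma> ^ t * (\<integral>x. h x \<partial>q))"
    by (simp only: integral_snth)
  also have "\<dots> = (\<integral>x. h x \<partial>q) / (1 - \<gamma>)"
    using \<gamma> by (simp add: suminf_mult2[symmetric] suminf_geometric summable_geometric divide_simps)
  finally show ?thesis .
qed

lemma J_ONMR_absorbing:
  assumes absorbing: "\<And>a. T s0 a = return_pmf s0"
    and fin: "finite (set_pmf (\<pi> s0))" and \<gamma>: "0 \<le> \<gamma>" "\<gamma> < 1"
  shows "J_ONMR T (return_pmf s0) R f \<gamma> \<pi> = f ((\<integral>a. R s0 a s0 \<partial>\<pi> s0) / (1 - \<gamma>))"
proof -
  let ?q = "map_pmf (Pair s0) (\<pi> s0)"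
  have "AE \<xi> in stream_space ?q.
      (\<Sum>t. \<gamma> ^ t * R (fst (\<xi> !! t)) (snd (\<xi> !! t)) (fst (\<xi> !! Suc t)))
      = (\<Sum>t. \<gamma> ^ t * R s0 (snd (\<xi> !! t)) s0)"
    using AE_stream_space_Pair_fst by eventually_elim (simp only:)
  then have "(\<integral>\<xi>. (\<Sum>t. \<gamma> ^ t * R (fst (\<xi> !! t)) (snd (\<xi> !! t)) (fst (\<xi> !! Suc t))) \<partial>stream_space ?q)
      = (\<integral>\<xi>. (\<Sum>t. \<gamma> ^ t * R s0 (snd (\<xi> !! t)) s0) \<partial>stream_space ?q)"
    by (rule integral_cong_AE[rotated 2]) simp_all
  also have "\<dots> = (\<integral>x. R s0 (snd x) s0 \<partial>?q) / (1 - \<gamma>)"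
    using fin \<gamma> by (intro integral_discounted_sum_stream_space_pmf) auto
  finally show ?thesis
    unfolding J_ONMR_def traj_absorbing[of T s0, OF absorbing] by simp
qed

lemma J_LTL_absorbing_two_steps:
  assumes absorbing: "\<And>a. T s0 a = return_pmf s0"
  shows "J_LTL T (return_pmf s0) (And (Atom (s0, a, s0)) (Next (Atom (s0, b, s0)))) \<pi>
    = pmf (\<pi> s0) a * pmf (\<pi> s0) b"
proof -
  let ?q = "map_pmf (Pair s0) (\<pi> s0)"
  let ?M = "stream_space ?q"
  let ?sat = "{\<xi>. sat (And (Atom (s0, a, s0)) (Next (Atom (s0, b, s0)))) \<xi> 0}"
  have sets: "sets ?M = sets (stream_space (count_space UNIV))"
    by (rule sets_stream_space_cong) simp
  have sat_eq: "?sat = {\<xi> \<in> space ?M. \<xi> !! 0 = (s0, a) \<and> fst (\<xi> !! 1) = s0 \<and> \<xi> !! 1 = (s0, b) \<and> fst (\<xi> !! 2) = s0}"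
    by (auto simp: space_stream_space numeral_2_eq_2)
  have "?sat \<in> sets ?M" unfolding sat_eq by measurable
  moreover have "sstart UNIV [(s0, a), (s0, b)] \<in> sets ?M"
    using sets sets_sstart by blast
  moreover have "AE \<xi> in ?M. \<xi> \<in> ?sat \<longleftrightarrow> \<xi> \<in> sstart UNIV [(s0, a), (s0, b)]"
    using AE_stream_space_Pair_fst
  proof eventually_elim
    case (elim \<xi>)
    with spec[OF elim, of 1] spec[OF elim, of 2] show ?case
      by (auto simp: sstart_eq less_Suc_eq numeral_2_eq_2)
  qed
  ultimately have "measure ?M ?sat = measure ?M (sstart UNIV [(s0, a), (s0, b)])"
    by (intro measure_eq_AE) auto
  then show ?thesis
    unfolding J_LTL_def traj_absorbing[of T s0, OF absorbing]
    by (simp add: measure_stream_space_pmf_sstart pmf_map_pmf_Pair)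
qed

definition policy_at :: "nat \<Rightarrow> nat pmf \<Rightarrow> nat \<Rightarrow> nat pmf" where
  "policy_at s0 p s = (if s = s0 then p else return_pmf undefined)"

lemma policy_at_in_policies: "set_pmf p \<subseteq> A \<Longrightarrow> policy_at s0 p \<in> policies {s0} A"
  by (auto simp: policies_def policy_at_def)

lemma induced_ord_J_ONMR_equal_mean:
  assumes absorbing: "\<And>a. T s0 a = return_pmf s0" and \<gamma>: "0 \<le> \<gamma>" "\<gamma> < 1"
    and A: "finite A" "set_pmf p \<subseteq> A" "set_pmf q \<subseteq> A"
    and mean: "(\<integral>a. R s0 a s0 \<partial>p) = (\<integral>a. R s0 a s0 \<partial>q)"
  shows "(policy_at s0 p, policy_at s0 q) \<in> induced_ord (J_ONMR T (return_pmf s0) R f \<gamma>) (policies {s0} A)"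
proof -
  have "finite (set_pmf p)" "finite (set_pmf q)"
    using A finite_subset by blast+
  then show ?thesis
    using A mean policy_at_in_policies
    by (simp add: induced_ord_def J_ONMR_absorbing[of T s0, OF absorbing] \<gamma> policy_at_def)
qed

lemma pmf_with_midpoint_mean_avoiding_pair:
  fixes r :: "nat \<Rightarrow> real"
  obtains Y where "set_pmf Y \<subseteq> {0, 1, 2}" "pmf Y 1 * pmf Y 2 = 0"
    "(\<integral>a. r a \<partial>Y) = (r 1 + r 2) / 2"
proof -
  have "(r 1 + r 2) / 2 \<in> closed_segment (r 0) (r 1) \<union> closed_segment (r 0) (r 2)"
    by (auto simp: closed_segment_eq_real_ivl)
  then obtain d u where d: "d \<in> {1, 2}" and u: "0 \<le> u" "u \<le> 1"
    and mid: "(r 1 + r 2) / 2 = (1 - u) * r 0 + u * r d"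
    by (auto simp: in_segment)
  let ?Y = "map_pmf (\<lambda>b. if b then d else 0) (bernoulli_pmf u)"
  have "set_pmf ?Y \<subseteq> {0, d}" by auto
  then have "set_pmf ?Y \<subseteq> {0, 1, 2}" "pmf ?Y 1 * pmf ?Y 2 = 0"
    using d by (auto simp: pmf_eq_0_set_pmf)
  moreover have "(\<integral>a. r a \<partial>?Y) = (1 - u) * r 0 + u * r d"
    using u by (simp add: algebra_simps)
  ultimately show ?thesis using that mid by metis
qed

lemma J_LTL_order_not_in_Ord_ONMR:
  defines "T \<equiv> \<lambda>(_::nat) (_::nat). return_pmf (0::nat)"
  shows "induced_ord (J_LTL T (return_pmf 0) (And (Atom (0, 1, 0)) (Next (Atom (0, 2, 0)))))
      (policies {0} {0, 1, 2}) \<notin> Ord_ONMR {0} {0, 1, 2} T (return_pmf 0)"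
    (is "?ord \<notin> _")
proof
  assume "?ord \<in> Ord_ONMR {0} {0, 1, 2} T (return_pmf 0)"
  then obtain R f \<gamma> where \<gamma>: "0 \<le> \<gamma>" "\<gamma> < 1"
    and ord_eq: "?ord = induced_ord (J_ONMR T (return_pmf 0) R f \<gamma>) (policies {0} {0, 1, 2})"
    unfolding Ord_ONMR_def by blast
  obtain Y where Y: "set_pmf Y \<subseteq> {0, 1, 2}" "pmf Y 1 * pmf Y 2 = 0"
    "(\<integral>a. R 0 a 0 \<partial>Y) = (R 0 1 0 + R 0 2 0) / 2"
    by (rule pmf_with_midpoint_mean_avoiding_pair)
  define X where "X = pmf_of_set {1, 2 :: nat}"
  have X: "set_pmf X \<subseteq> {0, 1, 2}" "pmf X 1 * pmf X 2 = 1 / 4"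
    "(\<integral>a. R 0 a 0 \<partial>X) = (R 0 1 0 + R 0 2 0) / 2"
    by (simp_all add: X_def integral_pmf_of_set)
  have J_LTL_at: "J_LTL T (return_pmf 0) (And (Atom (0, 1, 0)) (Next (Atom (0, 2, 0)))) (policy_at 0 p)
      = pmf p 1 * pmf p 2" for p
    by (simp add: T_def J_LTL_absorbing_two_steps policy_at_def)
  have "(policy_at 0 Y, policy_at 0 X) \<in> ?ord"
    unfolding ord_eq using X Y \<gamma> by (intro induced_ord_J_ONMR_equal_mean) (auto simp: T_def)
  from this[unfolded induced_ord_def mem_Collect_eq case_prod_conv J_LTL_at X(2) Y(2)] show False
    by simp
qed

theorem mainTheorem13:
  shows "\<exists>S A T I. is_env S A T I \<and>
           (\<exists>ord. preorder_on (policies S A) ord \<and> total_on (policies S A) ord \<and>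
                  ord \<in> Ord_LTL S A T I \<and> ord \<notin> Ord_ONMR S A T I)"
proof (intro exI conjI)
  let ?T = "\<lambda>(_::nat) (_::nat). return_pmf (0::nat)"
  let ?ord = "induced_ord (J_LTL ?T (return_pmf 0) (And (Atom (0, 1, 0)) (Next (Atom (0, 2, 0)))))
    (policies {0} {0, 1, 2})"
  show "is_env {0} {0, 1, 2} ?T (return_pmf 0)"
    by (simp add: is_env_def)
  show "preorder_on (policies {0} {0, 1, 2}) ?ord" "total_on (policies {0} {0, 1, 2}) ?ord"
    by (rule preorder_on_induced_ord total_on_induced_ord)+
  show "?ord \<in> Ord_LTL {0} {0, 1, 2} ?T (return_pmf 0)"
    unfolding Ord_LTL_def by auto
  show "?ord \<notin> Ord_ONMR {0} {0, 1, 2} ?T (return_pmf 0)"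
    by (rule J_LTL_order_not_in_Ord_ONMR)
qed

end
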